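(* Let $n\ge1$, $1\le i\le n$ be integers, $\alpha,\beta>0$, $\tau\ge0$ with $i\beta(\tau+1)>\tau$. Put $a=\frac{(n-i+1)\tau\beta+(n-i+1)\beta+\tau}{\beta}$ and, for $k\in\{0,1,2\}$, $b_k=\frac{i\tau\beta+(i+k)\beta-\tau}{\beta}$, and let $P=\left(\frac{\beta}{\alpha}\right)^{\tau}\frac{c(i,n)^{\tau+1}}{\beta^2}$. Then $$J^{(i)}_\tau(\beta)=C_1+C_2+C_3+C_4-C_5-C_6,$$ where $C_1=P\,B(a,b_0)$, $C_2=P\,i^2B(a,b_0)\left[\Psi'(b_0)+\Psi'(a)+(\Psi(b_0)-\Psi(a))^2\right]$, $C_3=P\,(n+1)^2B(a,b_2)\left[\Psi'(b_2)+\Psi'(a)+(\Psi(b_2)-\Psi(a))^2\right]$, $C_4=P\,2i\,B(a,b_0)\left[\Psi(b_0)-\Psi(a)\right]$, $C_5=P\,2(n+1)B(a,b_1)\left[\Psi(b_1)-\Psi(a)\right]$, $C_6=P\,2i(n+1)B(a,b_1)\left[\Psi'(b_1)+\Psi'(a)+(\Psi(b_1)-\Psi(a))^2\right]$.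
   Context: $c(i,n)=\frac{n!}{(n-i)!(i-1)!}$ and $f^{(i)}_{\alpha,\beta}(x)=\frac{c(i,n)\beta (x/\alpha)^{i\beta-1}}{\alpha(1+(x/\alpha)^\beta)^{n+1}}$, $x>0$, is the density of the $i$-th order statistic of a sample of size $n$ from the log-logistic distribution with scale $\alpha$ and shape $\beta$. With $\alpha$ regarded as known, $J^{(i)}_\tau(\beta)=\int_0^\infty\left(\frac{\partial}{\partial\beta}\log f^{(i)}_{\alpha,\beta}(x)\right)^2 f^{(i)}_{\alpha,\beta}(x)^{\tau+1}dx$. $B$ is the Beta function, $\Psi$ the digamma function and $\Psi'$ its derivative (trigamma function). *)

theory Defs
  imports "HOL-Analysis.Analysis"
begin

definition ccoef :: "nat \<Rightarrow> nat \<Rightarrow> real" where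
  "ccoef i n = fact n / (fact (n - i) * fact (i - 1))"

text \<open>Density of the i-th order statistic of a sample of size n from the
  log-logistic distribution with scale alpha and shape beta (for x > 0).\<close>
definition ll_os_density :: "nat \<Rightarrow> nat \<Rightarrow> real \<Rightarrow> real \<Rightarrow> real \<Rightarrow> real" where
  "ll_os_density i n \<alpha> \<beta> x =
     ccoef i n * \<beta> * (x / \<alpha>) powr (real i * \<beta> - 1)
     / (\<alpha> * (1 + (x / \<alpha>) powr \<beta>) ^ (n + 1))"

definition ll_os_score :: "nat \<Rightarrow> nat \<Rightarrow> real \<Rightarrow> real \<Rightarrow> real \<Rightarrow> real" where
  "ll_os_score i n \<alpha> \<beta> x = deriv (\<lambda>b. ln (ll_os_density i n \<alpha> b x)) \<beta>"

definition J_tau :: "nat \<Rightarrow> nat \<Rightarrow> real \<Rightarrow> real \<Rightarrow> real \<Rightarrow> real" where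
  "J_tau i n \<tau> \<alpha> \<beta> =
     (LINT x:{0<..}|lborel. (ll_os_score i n \<alpha> \<beta> x)\<^sup>2 * (ll_os_density i n \<alpha> \<beta> x) powr (\<tau> + 1))"

end

theory Submission
  imports Defs "HOL-Real_Asymp.Real_Asymp"
begin

(*
  With y = x / alpha, the substitution t = y^beta / (1 + y^beta), i.e. x = alpha exp (logit t / beta),
  maps (0, infinity) onto (0, 1).  It turns the score into (1 + i L - (n + 1) t L) / beta, where
  L = logit t = ln (t / (1 - t)), and f^(tau+1) dx into (beta/alpha)^tau c(i,n)^(tau+1) times the Beta
  kernel t^(b0 - 1) (1 - t)^(a - 1) dt.  Expanding the square (a factor t only raises b0 by one),
  J becomes a combination of the logit moments  int_0^1 L^j t^(p-1) (1-t)^(q-1) dt  with j <= 2.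
  Because t^(p+h-1) (1-t)^(q-h-1) = t^(p-1) (1-t)^(q-1) exp (h L), these moments are the successive
  derivatives of x |-> B(x, p + q - x) at x = p; differentiating under the integral sign and
  B(x, s - x) = Gamma(x) Gamma(s - x) / Gamma(s) yields the digamma and trigamma expressions.
*)

section \<open>Logit moments of the Beta kernel\<close>

definition beta_kernel :: "real \<Rightarrow> real \<Rightarrow> real \<Rightarrow> real" where
  "beta_kernel p q t = t powr (p - 1) * (1 - t) powr (q - 1)"

definition logit :: "real \<Rightarrow> real" where
  "logit t = ln t - ln (1 - t)"

definition logit_moment :: "nat \<Rightarrow> real \<Rightarrow> real \<Rightarrow> real" where
  "logit_moment j p q = (LINT t:{0<..<1}|lborel. logit t ^ j * beta_kernel p q t)"

lemma beta_kernel_nonneg: "0 \<le> beta_kernel p q t"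
  unfolding beta_kernel_def by simp

lemma borel_measurable_logit_power_beta_kernel [measurable]:
  "(\<lambda>t. logit t ^ j * beta_kernel p q t) \<in> borel_measurable borel"
  unfolding beta_kernel_def logit_def by measurable

lemma beta_kernel_shift:
  assumes "0 < t" "t < 1"
  shows "beta_kernel (p + h) (q - h) t = beta_kernel p q t * exp (h * logit t)"
  using assms unfolding beta_kernel_def logit_def
  by (simp add: powr_def exp_add[symmetric] algebra_simps)

lemma mult_beta_kernel: "0 < t \<Longrightarrow> t * beta_kernel p q t = beta_kernel (p + 1) q t"
  unfolding beta_kernel_def by (simp add: powr_mult_base mult.assoc[symmetric])

lemma ln_le_powr_divide:
  fixes y e :: real
  assumes "0 < y" "0 < e"
  shows "ln y \<le> y powr e / e"
proof -
  have "e * ln y = ln (y powr e)" using assms by simp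
  also have "\<dots> \<le> y powr e" using assms by (intro ln_bound) simp
  finally show ?thesis using assms by (simp add: field_simps)
qed

lemma abs_logit_le:
  assumes "0 < t" "t < 1" "0 < e"
  shows "\<bar>logit t\<bar> \<le> 2 / e * (t powr (- e) * (1 - t) powr (- e))"
proof -
  define A B where "A = t powr (- e)" and "B = (1 - t) powr (- e)"
  have "1 \<le> A" "1 \<le> B"
    unfolding A_def B_def using assms by (simp_all add: powr_minus one_le_inverse powr_le1)
  have "- ln t \<le> A / e"
    using ln_le_powr_divide[of "1 / t" e] assms by (simp add: A_def ln_div powr_minus_divide powr_divide)
  moreover have "- ln (1 - t) \<le> B / e"
    using ln_le_powr_divide[of "1 / (1 - t)" e] assms
    by (simp add: B_def ln_div powr_minus_divide powr_divide)
  moreover have "ln t < 0" "ln (1 - t) < 0" using assms by simp_all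
  ultimately have "\<bar>logit t\<bar> \<le> (A + B) / e"
    unfolding logit_def by (simp add: add_divide_distrib)
  also have "A + B \<le> 2 * (A * B)"
    using mult_nonneg_nonneg[of "A - 1" "B - 1"] \<open>1 \<le> A\<close> \<open>1 \<le> B\<close> by (simp add: algebra_simps)
  finally show ?thesis using assms by (simp add: A_def B_def divide_right_mono)
qed

lemma set_integrable_beta_kernel:
  assumes "0 < p" "0 < q"
  shows "set_integrable lborel {0<..<1} (beta_kernel p q)"
  using integrable_Beta[OF assms] unfolding beta_kernel_def
  by (rule set_integrable_subset) auto

lemma set_integrable_logit_power_beta_kernel:
  assumes "0 < p" "0 < q"
  shows "set_integrable lborel {0<..<1} (\<lambda>t. logit t ^ j * beta_kernel p q t)"
proof -
  \<comment> \<open>each factor of \<open>|logit t|\<close> is absorbed by lowering both exponents by \<open>e\<close>\<close>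
  define e where "e = min p q / (2 * (real j + 1))"
  have "0 < e" using assms by (simp add: e_def)
  have "real j * e = min p q * (real j / (2 * (real j + 1)))"
    by (simp add: e_def)
  also have "\<dots> < min p q * 1"
    using assms by (intro mult_strict_left_mono) (auto simp: field_simps)
  finally have "real j * e < min p q" by simp
  then have dominated: "set_integrable lborel {0<..<1}
      (\<lambda>t. (2 / e) ^ j * beta_kernel (p - real j * e) (q - real j * e) t)"
    by (intro set_integrable_mult_right set_integrable_beta_kernel) auto
  show ?thesis
  proof (rule set_integrable_bound[OF dominated])
    show "set_borel_measurable lborel {0<..<1} (\<lambda>t. logit t ^ j * beta_kernel p q t)"
      unfolding set_borel_measurable_def by measurable
    show "AE t in lborel. t \<in> {0<..<1} \<longrightarrow> norm (logit t ^ j * beta_kernel p q t) \<le>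
            norm ((2 / e) ^ j * beta_kernel (p - real j * e) (q - real j * e) t)"
    proof (intro AE_I2 impI)
      fix t :: real
      assume t: "t \<in> {0<..<1}"
      have "norm (logit t ^ j * beta_kernel p q t) = \<bar>logit t\<bar> ^ j * beta_kernel p q t"
        by (simp add: abs_mult power_abs beta_kernel_nonneg)
      also have "\<dots> \<le> (2 / e * (t powr (- e) * (1 - t) powr (- e))) ^ j * beta_kernel p q t"
        using t \<open>0 < e\<close> by (intro mult_right_mono power_mono abs_logit_le beta_kernel_nonneg) auto
      also have "\<dots> = (2 / e) ^ j * beta_kernel (p - real j * e) (q - real j * e) t"
      proof -
        have absorb: "(x powr (- e)) ^ j * x powr (r - 1) = x powr (r - real j * e - 1)"
          if "0 < x" for x r :: real
          using that by (simp add: powr_power powr_add[symmetric] algebra_simps)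
        show ?thesis
          using t absorb[of t p] absorb[of "1 - t" q] unfolding beta_kernel_def
          by (simp only: power_mult_distrib ac_simps) simp
      qed
      finally show "norm (logit t ^ j * beta_kernel p q t) \<le>
          norm ((2 / e) ^ j * beta_kernel (p - real j * e) (q - real j * e) t)"
        using \<open>0 < e\<close> by (simp add: beta_kernel_nonneg)
    qed
  qed
qed

lemma abs_exp_minus_one_minus_le: "\<bar>exp x - 1 - x\<bar> \<le> x\<^sup>2 * exp \<bar>x\<bar>" for x :: real
proof -
  obtain \<xi> where \<xi>: "\<bar>\<xi>\<bar> \<le> \<bar>x\<bar>" "exp x = (\<Sum>m<2. x ^ m / fact m) + exp \<xi> / fact 2 * x ^ 2"
    using Maclaurin_exp_le[of x 2] by blast
  then have "\<bar>exp x - 1 - x\<bar> = exp \<xi> / 2 * x\<^sup>2"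
    by (simp add: numeral_2_eq_2)
  also have "\<dots> \<le> exp \<bar>x\<bar> * x\<^sup>2"
  proof (intro mult_right_mono)
    have "exp \<xi> \<le> exp \<bar>x\<bar>" using \<xi>(1) by simp
    then show "exp \<xi> / 2 \<le> exp \<bar>x\<bar>" using exp_gt_zero[of \<xi>] by linarith
  qed simp
  finally show ?thesis by (simp add: mult.commute)
qed

lemma beta_kernel_shift_remainder:
  assumes "0 < t" "t < 1" "\<bar>h\<bar> \<le> d"
  shows "\<bar>logit t ^ j * beta_kernel (p + h) (q - h) t - logit t ^ j * beta_kernel p q t
            - h * (logit t ^ Suc j * beta_kernel p q t)\<bar>
         \<le> h\<^sup>2 * (\<bar>logit t\<bar> ^ (j + 2) *
              (beta_kernel (p + d) (q - d) t + beta_kernel (p - d) (q + d) t))"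
proof -
  define L K where "L = logit t" and "K = beta_kernel p q t"
  have "0 \<le> K" unfolding K_def by (rule beta_kernel_nonneg)
  have "exp \<bar>h * L\<bar> \<le> exp \<bar>d * L\<bar>"
    using assms(3) by (simp add: abs_mult mult_right_mono)
  also have "\<dots> \<le> exp (d * L) + exp (- d * L)"
    by (cases "0 \<le> d * L") (auto simp: add_increasing add_increasing2)
  finally have exp_le: "exp \<bar>h * L\<bar> \<le> exp (d * L) + exp (- d * L)" .
  have "L ^ j * (K * exp (h * L)) - L ^ j * K - h * (L ^ Suc j * K)
        = L ^ j * K * (exp (h * L) - 1 - h * L)"
    by (simp add: algebra_simps)
  then have "\<bar>L ^ j * (K * exp (h * L)) - L ^ j * K - h * (L ^ Suc j * K)\<bar>
        = \<bar>L\<bar> ^ j * K * \<bar>exp (h * L) - 1 - h * L\<bar>"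
    using \<open>0 \<le> K\<close> by (simp add: abs_mult power_abs)
  also have "\<dots> \<le> \<bar>L\<bar> ^ j * K * ((h * L)\<^sup>2 * (exp (d * L) + exp (- d * L)))"
    using \<open>0 \<le> K\<close> order_trans[OF abs_exp_minus_one_minus_le mult_left_mono[OF exp_le]]
    by (intro mult_left_mono) auto
  also have "\<dots> = h\<^sup>2 * ((\<bar>L\<bar> ^ j * L\<^sup>2) * (K * exp (d * L) + K * exp (- d * L)))"
    by (simp add: algebra_simps)
  also have "\<bar>L\<bar> ^ j * L\<^sup>2 = \<bar>L\<bar> ^ (j + 2)"
    by (simp add: power_add power2_eq_square)
  finally show ?thesis
    using assms beta_kernel_shift[of t p h q] beta_kernel_shift[of t p d q]
      beta_kernel_shift[of t p "- d" q]
    by (simp add: L_def K_def)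
qed

lemma has_real_derivative_if_quadratic_remainder:
  fixes F :: "real \<Rightarrow> real"
  assumes "0 < d" and remainder: "\<And>h. \<bar>h\<bar> \<le> d \<Longrightarrow> \<bar>F (p + h) - F p - h * D\<bar> \<le> C * h\<^sup>2"
  shows "(F has_real_derivative D) (at p)"
proof -
  have "eventually (\<lambda>h. h \<noteq> 0 \<and> \<bar>h\<bar> < d) (at (0::real))"
    using \<open>0 < d\<close> by (auto simp: eventually_at dist_real_def)
  then have "eventually (\<lambda>h. norm ((F (p + h) - F p) / h - D) \<le> C * \<bar>h\<bar>) (at 0)"
  proof eventually_elim
    case (elim h)
    then have "norm ((F (p + h) - F p) / h - D) = \<bar>F (p + h) - F p - h * D\<bar> / \<bar>h\<bar>"
      by (simp add: field_simps)
    also have "\<dots> \<le> C * h\<^sup>2 / \<bar>h\<bar>"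
      using elim remainder[of h] by (intro divide_right_mono) auto
    also have "\<dots> = C * \<bar>h\<bar>"
      using elim by (simp add: power2_eq_square field_simps)
    finally show ?case .
  qed
  moreover have "((\<lambda>h. C * \<bar>h\<bar>) \<longlongrightarrow> 0) (at 0)"
    by (auto intro!: tendsto_eq_intros)
  ultimately have "((\<lambda>h. (F (p + h) - F p) / h - D) \<longlongrightarrow> 0) (at 0)"
    by (rule Lim_null_comparison)
  then show ?thesis
    by (simp add: DERIV_def Lim_null[symmetric])
qed

lemma logit_moment_shift_remainder:
  assumes "0 < d" "d < p" "d < q" "\<bar>h\<bar> \<le> d"
  shows "\<bar>logit_moment j (p + h) (q - h) - logit_moment j p q - h * logit_moment (Suc j) p q\<bar>
         \<le> (LINT t:{0<..<1}|lborel. \<bar>logit t\<bar> ^ (j + 2) *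
              (beta_kernel (p + d) (q - d) t + beta_kernel (p - d) (q + d) t)) * h\<^sup>2"
proof -
  have abs_integrable: "set_integrable lborel {0<..<1} (\<lambda>t. \<bar>logit t\<bar> ^ k * beta_kernel p' q' t)"
    if "0 < p'" "0 < q'" for k p' q'
    using set_integrable_abs[OF set_integrable_logit_power_beta_kernel[OF that, of k]]
    by (simp add: abs_mult power_abs beta_kernel_nonneg)
  define f where "f t = logit t ^ j * beta_kernel (p + h) (q - h) t - logit t ^ j * beta_kernel p q t
                        - h * (logit t ^ Suc j * beta_kernel p q t)" for t
  have shifted: "set_integrable lborel {0<..<1} (\<lambda>t. logit t ^ j * beta_kernel (p + h) (q - h) t)"
    and unshifted: "set_integrable lborel {0<..<1} (\<lambda>t. logit t ^ k * beta_kernel p q t)" for k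
    using assms by (intro set_integrable_logit_power_beta_kernel; simp)+
  have f_integrable: "set_integrable lborel {0<..<1} f"
    unfolding f_def by (intro set_integral_diff shifted unshifted set_integrable_mult_right)
  have "logit_moment j (p + h) (q - h) - logit_moment j p q - h * logit_moment (Suc j) p q
        = (LINT t:{0<..<1}|lborel. f t)"
    unfolding f_def logit_moment_def
    by (simp add: set_integral_diff(2)[OF set_integral_diff(1)[OF shifted unshifted]
          set_integrable_mult_right[OF unshifted]] set_integral_diff(2)[OF shifted unshifted]
        del: power_Suc)
  also have "\<bar>\<dots>\<bar> \<le> (LINT t:{0<..<1}|lborel. \<bar>f t\<bar>)"
    using set_integral_norm_bound[OF f_integrable] by simp
  also have "\<dots> \<le> (LINT t:{0<..<1}|lborel. h\<^sup>2 * (\<bar>logit t\<bar> ^ (j + 2) *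
              (beta_kernel (p + d) (q - d) t + beta_kernel (p - d) (q + d) t)))"
  proof (intro set_integral_mono set_integrable_abs f_integrable set_integrable_mult_right)
    show "set_integrable lborel {0<..<1} (\<lambda>t. \<bar>logit t\<bar> ^ (j + 2) *
              (beta_kernel (p + d) (q - d) t + beta_kernel (p - d) (q + d) t))"
      unfolding distrib_left using assms by (intro set_integral_add abs_integrable) auto
  qed (use assms beta_kernel_shift_remainder in \<open>auto simp: f_def simp del: power_Suc\<close>)
  finally show ?thesis by (simp add: mult.commute)
qed

lemma has_real_derivative_logit_moment:
  assumes "0 < p" "p < s"
  shows "((\<lambda>x. logit_moment j x (s - x)) has_real_derivative logit_moment (Suc j) p (s - p)) (at p)"
proof -
  define d where "d = min p (s - p) / 2"
  have d: "0 < d" "d < p" "d < s - p" using assms by (auto simp: d_def)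
  define C where "C = (LINT t:{0<..<1}|lborel. \<bar>logit t\<bar> ^ (j + 2) *
              (beta_kernel (p + d) (s - p - d) t + beta_kernel (p - d) (s - p + d) t))"
  show ?thesis
  proof (rule has_real_derivative_if_quadratic_remainder[OF \<open>0 < d\<close>])
    fix h :: real
    assume "\<bar>h\<bar> \<le> d"
    then show "\<bar>logit_moment j (p + h) (s - (p + h)) - logit_moment j p (s - p)
                 - h * logit_moment (Suc j) p (s - p)\<bar> \<le> C * h\<^sup>2"
      using logit_moment_shift_remainder[OF d, of h j] by (simp add: C_def algebra_simps)
  qed
qed

lemma logit_moment_0:
  assumes "0 < p" "0 < q"
  shows "logit_moment 0 p q = Beta p q"
proof -
  have "logit_moment 0 p q = (LINT t:{0..1}|lborel. beta_kernel p q t)"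
    unfolding logit_moment_def set_lebesgue_integral_def
    by (intro Bochner_Integration.integral_cong) (auto simp: indicator_def beta_kernel_def)
  also have "\<dots> = integral {0..1} (beta_kernel p q)"
    using integrable_Beta[OF assms] unfolding beta_kernel_def[abs_def]
    by (rule set_borel_integral_eq_integral)
  also have "\<dots> = Beta p q"
    using has_integral_Beta_real[OF assms] unfolding beta_kernel_def[abs_def]
    by (rule integral_unique)
  finally show ?thesis .
qed

lemma has_real_derivative_Beta_diagonal:
  assumes "0 < p" "p < s"
  shows "((\<lambda>x. Beta x (s - x)) has_real_derivative
           Beta p (s - p) * (Digamma p - Digamma (s - p))) (at p)"
proof -
  have "((\<lambda>x. Gamma x * Gamma (s - x) / Gamma s) has_real_derivative
          (Gamma p * Digamma p * Gamma (s - p) + Gamma p * (Gamma (s - p) * Digamma (s - p) * (-1)))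
            / Gamma s) (at p)"
    using assms
    by (intro derivative_eq_intros refl DERIV_chain2[OF has_field_derivative_Gamma])
       (auto simp: Gamma_eq_zero_iff)
  then show ?thesis
    unfolding Beta_def by (simp add: algebra_simps add_divide_distrib)
qed

lemma logit_moment_1:
  assumes "0 < p" "0 < q"
  shows "logit_moment 1 p q = Beta p q * (Digamma p - Digamma q)"
proof -
  define s where "s = p + q"
  have "s - p = q" "p < s" "p \<in> {0<..<s}" using assms by (simp_all add: s_def)
  have "((\<lambda>x. logit_moment 0 x (s - x)) has_real_derivative
          Beta p q * (Digamma p - Digamma q)) (at p)"
    using has_real_derivative_Beta_diagonal[OF \<open>0 < p\<close> \<open>p < s\<close>] \<open>p \<in> {0<..<s}\<close>
    unfolding \<open>s - p = q\<close>
    by (rule has_field_derivative_transform_within_open[OF _ open_greaterThanLessThan])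
       (subst logit_moment_0, auto)
  moreover have "((\<lambda>x. logit_moment 0 x (s - x)) has_real_derivative logit_moment 1 p q) (at p)"
    using has_real_derivative_logit_moment[OF \<open>0 < p\<close> \<open>p < s\<close>, of 0]
    unfolding One_nat_def \<open>s - p = q\<close> .
  ultimately show ?thesis
    by (rule DERIV_unique[symmetric])
qed

lemma logit_moment_2:
  assumes "0 < p" "0 < q"
  shows "logit_moment 2 p q =
           Beta p q * (Polygamma 1 p + Polygamma 1 q + (Digamma p - Digamma q)\<^sup>2)"
proof -
  define s where "s = p + q"
  have "s - p = q" "p < s" "p \<in> {0<..<s}" using assms by (simp_all add: s_def)
  have "((\<lambda>x. Digamma x - Digamma (s - x)) has_real_derivative
          Polygamma 1 p - Polygamma 1 (s - p) * (-1)) (at p)"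
    using assms unfolding s_def
    by (intro derivative_eq_intros refl DERIV_chain2[OF has_field_derivative_Polygamma]) auto
  from DERIV_mult[OF has_real_derivative_Beta_diagonal[OF \<open>0 < p\<close> \<open>p < s\<close>] this]
  have "((\<lambda>x. Beta x (s - x) * (Digamma x - Digamma (s - x))) has_real_derivative
          Beta p q * (Polygamma 1 p + Polygamma 1 q + (Digamma p - Digamma q)\<^sup>2)) (at p)"
    unfolding \<open>s - p = q\<close> by (rule DERIV_cong) (simp add: power2_eq_square algebra_simps)
  then have "((\<lambda>x. logit_moment 1 x (s - x)) has_real_derivative
          Beta p q * (Polygamma 1 p + Polygamma 1 q + (Digamma p - Digamma q)\<^sup>2)) (at p)"
    using \<open>p \<in> {0<..<s}\<close>
    by (rule has_field_derivative_transform_within_open[OF _ open_greaterThanLessThan])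
       (subst logit_moment_1, auto)
  moreover have "((\<lambda>x. logit_moment 1 x (s - x)) has_real_derivative logit_moment 2 p q) (at p)"
    using has_real_derivative_logit_moment[OF \<open>0 < p\<close> \<open>p < s\<close>, of 1]
    unfolding Suc_1 \<open>s - p = q\<close> .
  ultimately show ?thesis
    by (rule DERIV_unique[symmetric])
qed

section \<open>The log-logistic order statistic under the logit substitution\<close>

lemma ccoef_pos: "0 < ccoef i n"
  unfolding ccoef_def by simp

lemma ll_os_density_pos:
  assumes "0 < \<alpha>" "0 < \<beta>" "0 < x"
  shows "0 < ll_os_density i n \<alpha> \<beta> x"
  using assms ccoef_pos[of i n] unfolding ll_os_density_def
  by (intro divide_pos_pos mult_pos_pos) (auto simp: add_pos_nonneg)

lemma ln_ll_os_density:
  assumes "0 < \<alpha>" "0 < \<beta>" "0 < x"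
  shows "ln (ll_os_density i n \<alpha> \<beta> x) = ln (ccoef i n) + ln \<beta> + (real i * \<beta> - 1) * ln (x / \<alpha>)
           - ln \<alpha> - real (n + 1) * ln (1 + exp (\<beta> * ln (x / \<alpha>)))"
proof -
  have "ll_os_density i n \<alpha> \<beta> x = ccoef i n * \<beta> * exp ((real i * \<beta> - 1) * ln (x / \<alpha>))
          / (\<alpha> * (1 + exp (\<beta> * ln (x / \<alpha>))) ^ (n + 1))"
    using assms unfolding ll_os_density_def by (simp add: powr_def)
  then show ?thesis
    using assms ccoef_pos[of i n] add_pos_pos[OF zero_less_one exp_gt_zero[of "\<beta> * ln (x / \<alpha>)"]]
    by (simp add: ln_mult ln_div ln_realpow del: of_nat_Suc) (simp add: algebra_simps)
qed

lemma ll_os_score_eq: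
  assumes "0 < \<alpha>" "0 < \<beta>" "0 < x"
  shows "ll_os_score i n \<alpha> \<beta> x = 1 / \<beta> + real i * ln (x / \<alpha>)
           - real (n + 1) * (exp (\<beta> * ln (x / \<alpha>)) * ln (x / \<alpha>)) / (1 + exp (\<beta> * ln (x / \<alpha>)))"
proof -
  define L where "L = ln (x / \<alpha>)"
  have "((\<lambda>b. ln (ccoef i n) + ln b + (real i * b - 1) * L - ln \<alpha> - real (n + 1) * ln (1 + exp (b * L)))
          has_real_derivative 1 / \<beta> + real i * L - real (n + 1) * (exp (\<beta> * L) * L) / (1 + exp (\<beta> * L)))
          (at \<beta>)"
    using assms
    by (auto intro!: derivative_eq_intros simp: add_pos_pos field_simps) (simp add: add_divide_distrib)
  then have "((\<lambda>b. ln (ll_os_density i n \<alpha> b x)) has_real_derivative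
          1 / \<beta> + real i * L - real (n + 1) * (exp (\<beta> * L) * L) / (1 + exp (\<beta> * L))) (at \<beta>)"
    by (rule has_field_derivative_transform_within_open[where S = "{0<..}"])
       (use assms in \<open>auto simp: ln_ll_os_density L_def\<close>)
  then show ?thesis
    unfolding ll_os_score_def L_def by (rule DERIV_imp_deriv)
qed

lemma exp_logit: "0 < t \<Longrightarrow> t < 1 \<Longrightarrow> exp (logit t) = t / (1 - t)"
  unfolding logit_def by (simp add: exp_diff)

lemma ll_os_score_at_logit:
  assumes "0 < \<alpha>" "0 < \<beta>" "0 < t" "t < 1"
  shows "ll_os_score i n \<alpha> \<beta> (\<alpha> * exp (logit t / \<beta>))
           = (1 + real i * logit t - (real n + 1) * t * logit t) / \<beta>"
  using assms by (simp add: ll_os_score_eq exp_logit) (simp add: field_simps)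

lemma ll_os_density_powr_at_logit:
  assumes "0 < \<alpha>" "0 < \<beta>" "0 < t" "t < 1"
  shows "ll_os_density i n \<alpha> \<beta> (\<alpha> * exp (logit t / \<beta>)) powr (\<tau> + 1)
           * (\<alpha> * exp (logit t / \<beta>) / (\<beta> * (t * (1 - t))))
         = (\<beta> / \<alpha>) powr \<tau> * ccoef i n powr (\<tau> + 1)
           * beta_kernel (real i * (\<tau> + 1) - \<tau> / \<beta>) ((real n + 1 - real i) * (\<tau> + 1) + \<tau> / \<beta>) t"
proof -
  define x c where "x = \<alpha> * exp (logit t / \<beta>)" and "c = ccoef i n"
  define Lt L1 where "Lt = ln t" and "L1 = ln (1 - t)"
  have "0 < x" "0 < c" using assms ccoef_pos by (simp_all add: x_def c_def)
  have logit: "logit t = Lt - L1" unfolding logit_def Lt_def L1_def ..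
  have "1 + t / (1 - t) = 1 / (1 - t)" using assms by (simp add: field_simps)
  then have "ln (ll_os_density i n \<alpha> \<beta> x)
        = ln c + ln \<beta> + (real i * \<beta> - 1) * (logit t / \<beta>) - ln \<alpha> + real (n + 1) * L1"
    using assms \<open>0 < x\<close> by (simp add: ln_ll_os_density x_def c_def L1_def exp_logit ln_div)
  then have "ll_os_density i n \<alpha> \<beta> x powr (\<tau> + 1) * (x / (\<beta> * (t * (1 - t))))
        = exp ((\<tau> + 1) * (ln c + ln \<beta> + (real i * \<beta> - 1) * (logit t / \<beta>) - ln \<alpha> + real (n + 1) * L1))
          * exp (ln \<alpha> + logit t / \<beta> - ln \<beta> - Lt - L1)"
    using ll_os_density_pos[OF assms(1,2) \<open>0 < x\<close>, of i n] assms
    by (simp add: powr_def x_def Lt_def L1_def exp_add exp_diff)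
  also have "\<dots> = exp (\<tau> * (ln \<beta> - ln \<alpha>) + (\<tau> + 1) * ln c)
          * exp ((real i * (\<tau> + 1) - \<tau> / \<beta> - 1) * Lt + ((real n + 1 - real i) * (\<tau> + 1) + \<tau> / \<beta> - 1) * L1)"
    unfolding exp_add[symmetric] logit using assms by (simp add: field_simps)
  also have "\<dots> = (\<beta> / \<alpha>) powr \<tau> * c powr (\<tau> + 1)
          * beta_kernel (real i * (\<tau> + 1) - \<tau> / \<beta>) ((real n + 1 - real i) * (\<tau> + 1) + \<tau> / \<beta>) t"
    using assms \<open>0 < c\<close> by (simp add: beta_kernel_def Lt_def L1_def powr_def exp_add ln_div)
  finally show ?thesis unfolding x_def c_def .
qed

lemma has_real_derivative_logit:
  assumes "0 < t" "t < 1"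
  shows "(logit has_real_derivative 1 / (t * (1 - t))) (at t)"
proof -
  have "((\<lambda>t. ln t - ln (1 - t)) has_real_derivative 1 / t + 1 / (1 - t)) (at t)"
    using assms by (auto intro!: derivative_eq_intros simp: divide_inverse)
  moreover have "1 / t + 1 / (1 - t) = 1 / (t * (1 - t))"
    using assms by (simp add: field_simps)
  ultimately show ?thesis by (simp add: logit_def[abs_def])
qed

lemma set_integral_Ioi_logit_substitution:
  fixes f :: "real \<Rightarrow> real"
  assumes "0 < \<alpha>" "0 < \<beta>"
    and cont: "\<And>x. 0 < x \<Longrightarrow> isCont f x" and nonneg: "\<And>x. 0 < x \<Longrightarrow> 0 \<le> f x"
    and integrable: "set_integrable lborel {0<..<1}
          (\<lambda>t. f (\<alpha> * exp (logit t / \<beta>)) * (\<alpha> * exp (logit t / \<beta>) / (\<beta> * (t * (1 - t)))))"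
  shows "(LINT x:{0<..}|lborel. f x)
         = (LINT t:{0<..<1}|lborel. f (\<alpha> * exp (logit t / \<beta>)) * (\<alpha> * exp (logit t / \<beta>) / (\<beta> * (t * (1 - t)))))"
proof -
  define g g' where "g t = \<alpha> * exp (logit t / \<beta>)" and "g' t = g t / (\<beta> * (t * (1 - t)))" for t
  have unit_interval: "einterval 0 1 = {0<..<(1::real)}"
    by (simp add: zero_ereal_def one_ereal_def)
  have "(LBINT x=0..\<infinity>. f x) = (LBINT t=0..1. f (g t) * g' t)"
  proof (rule interval_integral_substitution_nonneg(2))
    fix t :: real
    assume "0 < ereal t" "ereal t < 1"
    then have t: "0 < t" "t < 1" by (simp_all add: zero_ereal_def one_ereal_def)
    show "(g has_real_derivative g' t) (at t)"
      unfolding g_def[abs_def] g'_def using assms t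
      by (auto intro!: derivative_eq_intros has_real_derivative_logit simp: ac_simps)
    show "isCont f (g t)" "0 \<le> f (g t)"
      using assms by (simp_all add: g_def cont nonneg)
    show "isCont g' t"
      unfolding g'_def g_def logit_def using assms t by (intro continuous_intros) auto
  next
    fix t :: real
    assume "0 \<le> ereal t" "ereal t \<le> 1"
    then show "0 \<le> g' t"
      using assms by (simp add: g'_def g_def zero_ereal_def one_ereal_def)
  next
    have "(g \<longlongrightarrow> 0) (at_right 0)"
      unfolding g_def[abs_def] logit_def using assms by real_asymp
    then show "((ereal \<circ> g \<circ> real_of_ereal) \<longlongrightarrow> 0) (at_right 0)"
      by (simp add: zero_ereal_def ereal_tendsto_simps)
    have "filterlim g at_top (at_left 1)"
      unfolding g_def[abs_def] logit_def using assms by real_asymp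
    then show "((ereal \<circ> g \<circ> real_of_ereal) \<longlongrightarrow> \<infinity>) (at_left 1)"
      by (simp add: one_ereal_def ereal_tendsto_simps)
  qed (use integrable in \<open>simp_all add: unit_interval g_def g'_def\<close>)
  then show ?thesis
    unfolding interval_lebesgue_integral_0_infty
    by (simp add: interval_lebesgue_integral_def unit_interval g_def g'_def)
qed

lemma logit_quadratic_beta_kernel_expand:
  assumes "0 < t"
  shows "(1 + u * logit t - v * t * logit t)\<^sup>2 * beta_kernel b a t
         = beta_kernel b a t + u\<^sup>2 * (logit t ^ 2 * beta_kernel b a t)
           + v\<^sup>2 * (logit t ^ 2 * beta_kernel (b + 2) a t) + 2 * u * (logit t ^ 1 * beta_kernel b a t)
           - 2 * v * (logit t ^ 1 * beta_kernel (b + 1) a t)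
           - 2 * u * v * (logit t ^ 2 * beta_kernel (b + 1) a t)"
proof -
  have "beta_kernel (b + 2) a t = t * (t * beta_kernel b a t)"
    using assms by (simp add: mult_beta_kernel add.assoc)
  with mult_beta_kernel[OF assms, of b a, symmetric] show ?thesis
    by (simp add: power2_eq_square algebra_simps)
qed

lemma set_integral_logit_quadratic_beta_kernel:
  assumes "0 < b" "0 < a"
  shows "set_integrable lborel {0<..<1} (\<lambda>t. (1 + u * logit t - v * t * logit t)\<^sup>2 * beta_kernel b a t)"
    and "(LINT t:{0<..<1}|lborel. (1 + u * logit t - v * t * logit t)\<^sup>2 * beta_kernel b a t)
         = logit_moment 0 b a + u\<^sup>2 * logit_moment 2 b a + v\<^sup>2 * logit_moment 2 (b + 2) a
           + 2 * u * logit_moment 1 b a - 2 * v * logit_moment 1 (b + 1) a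
           - 2 * u * v * logit_moment 2 (b + 1) a"
proof -
  have moments: "set_integrable lborel {0<..<1} (\<lambda>t. logit t ^ j * beta_kernel p a t)"
    if "0 < p" for j p
    using that assms by (intro set_integrable_logit_power_beta_kernel)
  define expansion where "expansion t = beta_kernel b a t + u\<^sup>2 * (logit t ^ 2 * beta_kernel b a t)
           + v\<^sup>2 * (logit t ^ 2 * beta_kernel (b + 2) a t) + 2 * u * (logit t ^ 1 * beta_kernel b a t)
           - 2 * v * (logit t ^ 1 * beta_kernel (b + 1) a t)
           - 2 * u * v * (logit t ^ 2 * beta_kernel (b + 1) a t)" for t
  note summands = set_integrable_beta_kernel[OF assms] moments[OF \<open>0 < b\<close>]
    moments[of "b + 1"] moments[of "b + 2"]
  have expansion: "expansion t = (1 + u * logit t - v * t * logit t)\<^sup>2 * beta_kernel b a t"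
    if "t \<in> {0<..<1}" for t
    using that by (simp add: expansion_def logit_quadratic_beta_kernel_expand)
  have integrable_iff: "set_integrable lborel {0<..<1}
      (\<lambda>t. (1 + u * logit t - v * t * logit t)\<^sup>2 * beta_kernel b a t) = set_integrable lborel {0<..<1} expansion"
    and integral_eq: "(LINT t:{0<..<1}|lborel. (1 + u * logit t - v * t * logit t)\<^sup>2 * beta_kernel b a t)
      = (LINT t:{0<..<1}|lborel. expansion t)"
    by (rule set_integrable_cong set_lebesgue_integral_cong; simp add: expansion)+
  have "set_integrable lborel {0<..<1} expansion"
    unfolding expansion_def using assms
    by (intro set_integral_add set_integral_diff set_integrable_mult_right summands) auto
  then show "set_integrable lborel {0<..<1} (\<lambda>t. (1 + u * logit t - v * t * logit t)\<^sup>2 * beta_kernel b a t)"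
    unfolding integrable_iff .
  show "(LINT t:{0<..<1}|lborel. (1 + u * logit t - v * t * logit t)\<^sup>2 * beta_kernel b a t)
         = logit_moment 0 b a + u\<^sup>2 * logit_moment 2 b a + v\<^sup>2 * logit_moment 2 (b + 2) a
           + 2 * u * logit_moment 1 b a - 2 * v * logit_moment 1 (b + 1) a
           - 2 * u * v * logit_moment 2 (b + 1) a"
    unfolding integral_eq expansion_def logit_moment_def using assms
    by (simp only: set_integral_add set_integral_diff set_integrable_mult_right set_integral_mult_right
        summands power_0 mult_1 simp_thms)
qed

lemma isCont_ll_os_density:
  assumes "0 < \<alpha>" "0 < \<beta>" "0 < x"
  shows "isCont (ll_os_density i n \<alpha> \<beta>) x"
  unfolding ll_os_density_def[abs_def]
  using assms add_pos_nonneg[OF zero_less_one powr_ge_zero[of "x / \<alpha>" \<beta>]]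
  by (intro continuous_intros) auto

lemma isCont_ll_os_score:
  assumes "0 < \<alpha>" "0 < \<beta>" "0 < x"
  shows "isCont (ll_os_score i n \<alpha> \<beta>) x"
proof -
  have "eventually (\<lambda>y. y \<in> {0<..}) (nhds x)"
    using assms by (intro eventually_nhds_in_open) auto
  then have "eventually (\<lambda>y. ll_os_score i n \<alpha> \<beta> y = 1 / \<beta> + real i * ln (y / \<alpha>)
      - real (n + 1) * (exp (\<beta> * ln (y / \<alpha>)) * ln (y / \<alpha>)) / (1 + exp (\<beta> * ln (y / \<alpha>)))) (nhds x)"
    by eventually_elim (use assms in \<open>simp add: ll_os_score_eq\<close>)
  moreover have "isCont (\<lambda>y. 1 / \<beta> + real i * ln (y / \<alpha>)
      - real (n + 1) * (exp (\<beta> * ln (y / \<alpha>)) * ln (y / \<alpha>)) / (1 + exp (\<beta> * ln (y / \<alpha>)))) x"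
    using assms add_pos_pos[OF zero_less_one exp_gt_zero[of "\<beta> * ln (x / \<alpha>)"]]
    by (intro continuous_intros) auto
  ultimately show ?thesis
    by (simp add: isCont_cong)
qed

lemma J_tau_eq_logit_moments:
  assumes "0 < \<alpha>" "0 < \<beta>"
    and b: "b = real i * (\<tau> + 1) - \<tau> / \<beta>" and a: "a = (real n + 1 - real i) * (\<tau> + 1) + \<tau> / \<beta>"
    and "0 < b" "0 < a"
  shows "J_tau i n \<tau> \<alpha> \<beta> = (\<beta> / \<alpha>) powr \<tau> * ccoef i n powr (\<tau> + 1) / \<beta>\<^sup>2 *
      (logit_moment 0 b a + (real i)\<^sup>2 * logit_moment 2 b a + (real n + 1)\<^sup>2 * logit_moment 2 (b + 2) a
       + 2 * real i * logit_moment 1 b a - 2 * (real n + 1) * logit_moment 1 (b + 1) a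
       - 2 * real i * (real n + 1) * logit_moment 2 (b + 1) a)"
proof -
  define P where "P = (\<beta> / \<alpha>) powr \<tau> * ccoef i n powr (\<tau> + 1) / \<beta>\<^sup>2"
  define f where "f x = (ll_os_score i n \<alpha> \<beta> x)\<^sup>2 * ll_os_density i n \<alpha> \<beta> x powr (\<tau> + 1)" for x
  define Q where "Q t = (1 + real i * logit t - (real n + 1) * t * logit t)\<^sup>2 * beta_kernel b a t" for t
  have substituted: "f (\<alpha> * exp (logit t / \<beta>)) * (\<alpha> * exp (logit t / \<beta>) / (\<beta> * (t * (1 - t))))
      = P * Q t" if "t \<in> {0<..<1}" for t
  proof -
    have t: "0 < t" "t < 1" using that by simp_all
    show ?thesis
      unfolding f_def mult.assoc ll_os_density_powr_at_logit[OF assms(1,2) t]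
        ll_os_score_at_logit[OF assms(1,2) t] b[symmetric] a[symmetric]
      by (simp add: P_def Q_def field_simps)
  qed
  have "set_integrable lborel {0<..<1} (\<lambda>t. P * Q t)"
    unfolding Q_def using assms by (intro set_integrable_mult_right set_integral_logit_quadratic_beta_kernel)
  then have substituted_integrable: "set_integrable lborel {0<..<1}
      (\<lambda>t. f (\<alpha> * exp (logit t / \<beta>)) * (\<alpha> * exp (logit t / \<beta>) / (\<beta> * (t * (1 - t)))))"
    by (subst set_integrable_cong[OF refl refl substituted])
  have "J_tau i n \<tau> \<alpha> \<beta> = (LINT x:{0<..}|lborel. f x)"
    unfolding J_tau_def f_def ..
  also have "\<dots> = (LINT t:{0<..<1}|lborel.
      f (\<alpha> * exp (logit t / \<beta>)) * (\<alpha> * exp (logit t / \<beta>) / (\<beta> * (t * (1 - t)))))"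
  proof (rule set_integral_Ioi_logit_substitution[OF assms(1,2)])
    show "isCont f x" if "0 < x" for x
      unfolding f_def[abs_def] using assms that ll_os_density_pos[of \<alpha> \<beta> x i n]
      by (intro continuous_intros isCont_ll_os_score continuous_at_within_powr isCont_ll_os_density)
        auto
  qed (simp add: f_def, fact substituted_integrable)
  also have "\<dots> = (LINT t:{0<..<1}|lborel. P * Q t)"
    by (rule set_lebesgue_integral_cong) (simp, intro allI impI substituted, simp)
  finally show ?thesis
    using set_integral_logit_quadratic_beta_kernel(2)[OF \<open>0 < b\<close> \<open>0 < a\<close>, of "real i" "real n + 1"]
    by (simp add: P_def Q_def)
qed

theorem theorem7:
  fixes n i :: nat and \<alpha> \<beta> \<tau> :: real
  assumes "n \<ge> 1" "1 \<le> i" "i \<le> n"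
    and "\<alpha> > 0" "\<beta> > 0" "\<tau> \<ge> 0"
    and "real i * \<beta> * (\<tau> + 1) > \<tau>"
  shows
    "let a = ((real n - real i + 1) * \<tau> * \<beta> + (real n - real i + 1) * \<beta> + \<tau>) / \<beta>;
         b = (\<lambda>k::nat. (real i * \<tau> * \<beta> + (real i + real k) * \<beta> - \<tau>) / \<beta>);
         P = (\<beta> / \<alpha>) powr \<tau> * ccoef i n powr (\<tau> + 1) / \<beta>\<^sup>2;
         C1 = P * Beta a (b 0);
         C2 = P * (real i)\<^sup>2 * Beta a (b 0) *
                (Polygamma 1 (b 0) + Polygamma 1 a + (Digamma (b 0) - Digamma a)\<^sup>2);
         C3 = P * (real n + 1)\<^sup>2 * Beta a (b 2) *
                (Polygamma 1 (b 2) + Polygamma 1 a + (Digamma (b 2) - Digamma a)\<^sup>2);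
         C4 = P * 2 * real i * Beta a (b 0) * (Digamma (b 0) - Digamma a);
         C5 = P * 2 * (real n + 1) * Beta a (b 1) * (Digamma (b 1) - Digamma a);
         C6 = P * 2 * real i * (real n + 1) * Beta a (b 1) *
                (Polygamma 1 (b 1) + Polygamma 1 a + (Digamma (b 1) - Digamma a)\<^sup>2)
     in J_tau i n \<tau> \<alpha> \<beta> = C1 + C2 + C3 + C4 - C5 - C6"
proof -
  define b a where "b = real i * (\<tau> + 1) - \<tau> / \<beta>" and "a = (real n + 1 - real i) * (\<tau> + 1) + \<tau> / \<beta>"
  have "0 < b"
    using assms(5,7) by (simp add: b_def field_simps)
  have "0 < a"
    using assms(3,5,6) by (simp add: a_def add_pos_nonneg)
  have shape_b: "(real i * \<tau> * \<beta> + (real i + real k) * \<beta> - \<tau>) / \<beta> = b + real k" for k :: nat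
    using assms(5) by (simp add: b_def field_simps)
  have shape_a: "((real n - real i + 1) * \<tau> * \<beta> + (real n - real i + 1) * \<beta> + \<tau>) / \<beta> = a"
    using assms(5) by (simp add: a_def field_simps)
  have "0 < b + 1" "0 < b + 2" using \<open>0 < b\<close> by simp_all
  note J = J_tau_eq_logit_moments[OF assms(4,5) b_def a_def \<open>0 < b\<close> \<open>0 < a\<close>]
  note moments = logit_moment_0[OF \<open>0 < b\<close> \<open>0 < a\<close>]
    logit_moment_1[OF \<open>0 < b\<close> \<open>0 < a\<close>] logit_moment_1[OF \<open>0 < b + 1\<close> \<open>0 < a\<close>]
    logit_moment_2[OF \<open>0 < b\<close> \<open>0 < a\<close>] logit_moment_2[OF \<open>0 < b + 1\<close> \<open>0 < a\<close>]
    logit_moment_2[OF \<open>0 < b + 2\<close> \<open>0 < a\<close>]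
  have distrib: "P * (x0 + u\<^sup>2 * x2 + v\<^sup>2 * y2 + 2 * u * x1 - 2 * v * z1 - 2 * u * v * z2)
      = P * x0 + P * u\<^sup>2 * x2 + P * v\<^sup>2 * y2 + P * 2 * u * x1 - P * 2 * v * z1 - P * 2 * u * v * z2"
    for P x0 x2 y2 x1 z1 z2 u v :: real
    by (simp add: algebra_simps)
  show ?thesis
    unfolding Let_def shape_a shape_b Beta_commute[of a] J moments distrib
    by (simp only: of_nat_0 of_nat_1 of_nat_numeral add_0_right mult.assoc)
qed

end
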